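(* Let $k\geq 2$ and $n\geq k+1$ be integers. In the quasi-shuffle algebra $(\mathcal{H},\ast)$, $$ \begin{aligned} \sum_{\substack{ r, s_i\geq 1,\ s_1\geq 2 \\ r+s_1+\cdots +s_{k-1}=n}} z_{r}\ast z_{s_1,\dots, s_{k-1}} = &\sum_{\substack{ t_i\geq 1,\ t_1=1,\ t_2\geq 2 \\ t_1+\cdots+t_{k}=n}} z_{t_1,t_2,\dots, t_{k}} +(k-1) \sum_{\substack{t_i\geq 1,\ t_1\geq 2,\ t_2=1 \\ t_1+\cdots+t_{k}=n }} z_{t_1,\dots,t_{k}}\\ &+k \sum_{\substack{t_i\geq 1,\ t_1\geq 2,\ t_2\geq 2 \\ t_1+\cdots+t_{k}=n}} z_{t_1,\dots, t_{k}} + (n-k) \sum_{\substack{u_i\geq 1,\ u_1\geq 2 \\ u_1+\cdots+u_{k-1}=n }} z_{u_1,\dots, u_{k-1}}. \end{aligned} $$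
   Context: Let $\mathcal{H}$ be the free $\mathbb{Z}$-module on the free monoid generated by letters $z_s$ ($s\geq 1$ an integer); write $z_{s_1,\dots,s_k}:=z_{s_1}z_{s_2}\cdots z_{s_k}$ for a word and $1$ for the empty word. The quasi-shuffle (stuffle) product $\ast$ is the $\mathbb{Z}$-bilinear product on $\mathcal{H}$ defined on words recursively by $1\ast u=u\ast 1=u$ and $(z_{r}u)\ast(z_{s}v)=z_{r}\,(u\ast (z_{s}v))+z_{s}\,((z_{r}u)\ast v)+z_{r+s}\,(u\ast v)$ for words $u,v$ and integers $r,s\geq 1$ (juxtaposition denotes concatenation, extended linearly). *)

theory Defs
  imports Main
begin

text \<open>An element of the free Z-module H on words z_{s_1..s_k} (letters s_i \<ge> 1) is
  represented by its coefficient function on words (finitely supported); a word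
  z_{s_1,...,s_k} is the list [s_1,...,s_k], the empty word 1 is [].\<close>

type_synonym H = "nat list \<Rightarrow> int"

definition word :: "nat list \<Rightarrow> H" where
  "word u = (\<lambda>w. if w = u then 1 else 0)"

definition scale :: "int \<Rightarrow> H \<Rightarrow> H" where
  "scale c f = (\<lambda>w. c * f w)"

definition Hadd :: "H \<Rightarrow> H \<Rightarrow> H" where
  "Hadd f g = (\<lambda>w. f w + g w)"

definition Hsum :: "('a \<Rightarrow> H) \<Rightarrow> 'a set \<Rightarrow> H" where
  "Hsum F A = (\<lambda>w. \<Sum>a\<in>A. F a w)"

text \<open>Left concatenation by a letter, extended linearly: coefficient of w in z_a f.\<close>
definition cons_letter :: "nat \<Rightarrow> H \<Rightarrow> H" where
  "cons_letter a f = (\<lambda>w. case w of [] \<Rightarrow> 0 | b # w' \<Rightarrow> (if b = a then f w' else 0))"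

fun stuffle :: "nat list \<Rightarrow> nat list \<Rightarrow> H" where
  "stuffle [] v = word v"
| "stuffle (r # u) [] = word (r # u)"
| "stuffle (r # u) (s # v) =
     Hadd (Hadd (cons_letter r (stuffle u (s # v)))
                (cons_letter s (stuffle (r # u) v)))
          (cons_letter (r + s) (stuffle u v))"

end

theory Submission imports Defs begin

text \<open>Compare coefficients of a word \<open>w\<close>. The coefficient of \<open>w\<close> in \<open>z\<^sub>r \<ast> s\<close> counts the
  ways of obtaining \<open>w\<close> by inserting the letter \<open>r\<close> into \<open>s\<close> or by adding \<open>r\<close> to one letter
  of \<open>s\<close>. Summing over the pairs \<open>(r, s)\<close> of the left-hand side and exchanging the order of
  summation, an insertion at position \<open>i\<close> is undone by deleting the \<open>i\<close>-th letter of \<open>w\<close>,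
  which yields an admissible pair iff \<open>w\<close> is a composition of \<open>n\<close> into \<open>k\<close> parts whose first
  remaining letter is \<open>\<ge> 2\<close>; this gives the weights \<open>1\<close>, \<open>k - 1\<close> and \<open>k\<close>. A merge at position \<open>i\<close>
  is undone by subtracting \<open>r\<close> from \<open>w\<^sub>i\<close>; for a composition \<open>w\<close> into \<open>k - 1\<close> parts with
  \<open>w\<^sub>1 \<ge> 2\<close> there are \<open>w\<^sub>i - 1\<close> choices of \<open>r\<close> (one fewer at the head), \<open>n - k\<close> in total.\<close>

lemma Hsum_word_apply:
  assumes "finite B"
  shows "Hsum word B w = of_bool (w \<in> B)"
  unfolding Hsum_def word_def using assms by simp

lemma finite_length_sum_list_le: "finite {s :: nat list. length s = m \<and> sum_list s \<le> n}"
proof (rule finite_subset)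
  show "{s :: nat list. length s = m \<and> sum_list s \<le> n} \<subseteq> {s. set s \<subseteq> {..n} \<and> length s = m}"
    using member_le_sum_list by fastforce
  show "finite {s. set s \<subseteq> {..n} \<and> length s = m}"
    by (intro finite_lists_length_eq) auto
qed

lemma Hsum_word_length_apply:
  assumes "\<forall>t. P t \<longrightarrow> sum_list t = n" \<comment> \<open>object-level, so that the simplifier can discharge it\<close>
  shows "Hsum word {t :: nat list. length t = m \<and> P t} w = of_bool (length w = m \<and> P w)"
proof -
  have "finite {t :: nat list. length t = m \<and> P t}"
    by (rule finite_subset[OF _ finite_length_sum_list_le[of m n]]) (use assms in auto)
  then show ?thesis by (simp add: Hsum_word_apply)
qed

lemma insert_at_eq_iff:
  assumes "i \<le> length s"
  shows "w = take i s @ r # drop i s \<longleftrightarrow> i < length w \<and> (r, s) = (w ! i, take i w @ drop (Suc i) w)"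
proof
  assume "w = take i s @ r # drop i s"
  then show "i < length w \<and> (r, s) = (w ! i, take i w @ drop (Suc i) w)"
    using assms by (simp add: nth_append min_def)
next
  assume "i < length w \<and> (r, s) = (w ! i, take i w @ drop (Suc i) w)"
  then show "w = take i s @ r # drop i s"
    by (simp add: id_take_nth_drop min_def)
qed

lemma list_update_add_eq_iff:
  fixes s w :: "nat list"
  assumes "i < length s"
  shows "w = s[i := r + s ! i] \<longleftrightarrow> i < length w \<and> r \<le> w ! i \<and> s = w[i := w ! i - r]"
  using assms by auto

lemma stuffle_letter_apply:
  "stuffle [r] s w = (\<Sum>i\<le>length s. of_bool (w = take i s @ r # drop i s))
                    + (\<Sum>i<length s. of_bool (w = s[i := r + s ! i]))"
proof (induction s arbitrary: w)
  case Nil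
  then show ?case by (simp add: word_def)
next
  case (Cons a s)
  show ?case
  proof (cases w)
    case Nil
    have "[] \<noteq> (a # s)[i := x]" for i x by (metis list.discI list_update_nonempty)
    with Nil show ?thesis by (simp add: Hadd_def cons_letter_def del: list_update.simps)
  next
    case (Cons b w')
    have insert_Suc: "of_bool (w = take (Suc i) (a # s) @ r # drop (Suc i) (a # s))
        = (of_bool (b = a) * of_bool (w' = take i s @ r # drop i s) :: int)" for i
      using Cons by simp
    have update_Suc: "of_bool (w = (a # s)[Suc i := r + (a # s) ! Suc i])
        = (of_bool (b = a) * of_bool (w' = s[i := r + s ! i]) :: int)" for i
      using Cons by simp
    have "stuffle [r] (a # s) w = of_bool (b = r \<and> w' = a # s) + of_bool (b = a) * stuffle [r] s w'
          + of_bool (b = r + a \<and> w' = s)"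
      using Cons by (simp add: Hadd_def cons_letter_def word_def)
    also have "\<dots> = of_bool (w = take 0 (a # s) @ r # drop 0 (a # s))
        + (\<Sum>i\<le>length s. of_bool (w = take (Suc i) (a # s) @ r # drop (Suc i) (a # s)))
        + (of_bool (w = (a # s)[0 := r + (a # s) ! 0])
           + (\<Sum>i<length s. of_bool (w = (a # s)[Suc i := r + (a # s) ! Suc i])))"
      unfolding insert_Suc update_Suc Cons.IH sum_distrib_left[symmetric] using Cons
      by (simp add: algebra_simps)
    also have "\<dots> = (\<Sum>i\<le>length (a # s). of_bool (w = take i (a # s) @ r # drop i (a # s)))
        + (\<Sum>i<length (a # s). of_bool (w = (a # s)[i := r + (a # s) ! i]))"
      by (simp only: length_Cons sum.atMost_Suc_shift sum.lessThan_Suc_shift)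
    finally show ?thesis .
  qed
qed

text \<open>Summing over pairs \<open>(r, s)\<close> and exchanging the order of summation: an insertion
  position \<open>i\<close> determines \<open>(r, s)\<close> from \<open>w\<close> by deleting the \<open>i\<close>-th letter, a merge position
  determines \<open>s\<close> from \<open>w\<close> and \<open>r\<close>.\<close>

lemma Hsum_stuffle_letter_apply:
  assumes P: "finite P" and length_P: "\<And>r s. (r, s) \<in> P \<Longrightarrow> length s = m"
  shows "Hsum (\<lambda>(r, s). stuffle [r] s) P w =
           (\<Sum>i\<le>m. of_bool (i < length w \<and> (w ! i, take i w @ drop (Suc i) w) \<in> P))
         + (\<Sum>i<m. int (card {r. i < length w \<and> r \<le> w ! i \<and> (r, w[i := w ! i - r]) \<in> P}))"
proof -
  let ?I = "\<lambda>i x. of_bool (i < length w \<and> x = (w ! i, take i w @ drop (Suc i) w)) :: int"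
  let ?M = "\<lambda>i x. of_bool (i < length w \<and> fst x \<le> w ! i \<and> snd x = w[i := w ! i - fst x]) :: int"
  have "Hsum (\<lambda>(r, s). stuffle [r] s) P w = (\<Sum>x\<in>P. stuffle [fst x] (snd x) w)"
    by (simp add: Hsum_def case_prod_beta)
  also have "\<dots> = (\<Sum>x\<in>P. (\<Sum>i\<le>m. ?I i x) + (\<Sum>i<m. ?M i x))"
  proof (rule sum.cong[OF refl])
    fix x assume "x \<in> P"
    moreover obtain r s where x: "x = (r, s)" by fastforce
    ultimately have "length s = m" using length_P by simp
    then show "stuffle [fst x] (snd x) w = (\<Sum>i\<le>m. ?I i x) + (\<Sum>i<m. ?M i x)"
      unfolding x stuffle_letter_apply
      by (intro arg_cong2[where f = "(+)"] sum.cong)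
         (auto simp: insert_at_eq_iff list_update_add_eq_iff)
  qed
  also have "\<dots> = (\<Sum>i\<le>m. \<Sum>x\<in>P. ?I i x) + (\<Sum>i<m. \<Sum>x\<in>P. ?M i x)"
    by (simp only: sum.distrib sum.swap[of _ P])
  also have "(\<Sum>i\<le>m. \<Sum>x\<in>P. ?I i x)
      = (\<Sum>i\<le>m. of_bool (i < length w \<and> (w ! i, take i w @ drop (Suc i) w) \<in> P))"
  proof (rule sum.cong[OF refl])
    fix i
    show "(\<Sum>x\<in>P. ?I i x) = of_bool (i < length w \<and> (w ! i, take i w @ drop (Suc i) w) \<in> P)"
      using P by (cases "i < length w") simp_all
  qed
  also have "(\<Sum>i<m. \<Sum>x\<in>P. ?M i x)
      = (\<Sum>i<m. int (card {r. i < length w \<and> r \<le> w ! i \<and> (r, w[i := w ! i - r]) \<in> P}))"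
  proof (rule sum.cong[OF refl])
    fix i
    let ?g = "\<lambda>r. (r, w[i := w ! i - r])"
    have "P \<inter> {x. i < length w \<and> fst x \<le> w ! i \<and> snd x = w[i := w ! i - fst x]}
        = ?g ` {r. i < length w \<and> r \<le> w ! i \<and> (r, w[i := w ! i - r]) \<in> P}"
      by auto
    moreover have "inj_on ?g X" for X by (rule inj_onI) simp
    ultimately show "(\<Sum>x\<in>P. ?M i x)
        = int (card {r. i < length w \<and> r \<le> w ! i \<and> (r, w[i := w ! i - r]) \<in> P})"
      using P by (simp only: sum_of_bool_eq card_image)
  qed
  finally show ?thesis .
qed

definition is_composition :: "nat \<Rightarrow> nat list \<Rightarrow> bool" where
  "is_composition n w \<longleftrightarrow> (\<forall>x\<in>set w. x \<ge> 1) \<and> sum_list w = n"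

definition admissible_pairs :: "nat \<Rightarrow> nat \<Rightarrow> (nat \<times> nat list) set" where
  "admissible_pairs k n = {(r, s). r \<ge> 1 \<and> length s = k - 1 \<and> (\<forall>x\<in>set s. x \<ge> 1) \<and> s ! 0 \<ge> 2
                                  \<and> r + sum_list s = n}"

lemma finite_admissible_pairs: "finite (admissible_pairs k n)"
proof (rule finite_subset)
  show "admissible_pairs k n \<subseteq> {..n} \<times> {s. length s = k - 1 \<and> sum_list s \<le> n}"
    unfolding admissible_pairs_def by auto
  show "finite ({..n} \<times> {s. length s = k - 1 \<and> sum_list s \<le> n})"
    using finite_length_sum_list_le by blast
qed

lemma delete_mem_admissible_pairs_iff:
  assumes "2 \<le> k" "i < length w"
  shows "(w ! i, take i w @ drop (Suc i) w) \<in> admissible_pairs k n \<longleftrightarrow>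
         length w = k \<and> is_composition n w \<and> (if i = 0 then w ! 1 \<ge> 2 else w ! 0 \<ge> 2)"
proof -
  define xs where "xs = take i w"
  define ys where "ys = drop (Suc i) w"
  define y where "y = w ! i"
  have w: "w = xs @ y # ys" unfolding xs_def ys_def y_def using assms(2) by (simp add: id_take_nth_drop)
  have i: "length xs = i" using assms(2) xs_def by simp
  show ?thesis
    using assms i unfolding w admissible_pairs_def is_composition_def
    by (cases xs) (auto simp: add.assoc)
qed

lemma update_sub_mem_admissible_pairs_iff:
  assumes "i < length w" "r \<le> w ! i"
  shows "(r, w[i := w ! i - r]) \<in> admissible_pairs k n \<longleftrightarrow>
         length w = k - 1 \<and> is_composition n w \<and> w ! 0 \<ge> 2 \<and> 1 \<le> r \<and> r < w ! i
         \<and> (i = 0 \<longrightarrow> r + 2 \<le> w ! 0)"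
proof -
  have r_le: "r \<le> sum_list w"
    using assms elem_le_sum_list order_trans by blast
  have sum: "sum_list (w[i := w ! i - r]) = sum_list w - r"
    using assms elem_le_sum_list[of i w] by (simp add: sum_list_update)
  have pos: "(\<forall>x\<in>set (w[i := w ! i - r]). x \<ge> 1)
      \<longleftrightarrow> (\<forall>j<length w. j \<noteq> i \<longrightarrow> w ! j \<ge> 1) \<and> w ! i - r \<ge> 1"
    using assms(1) unfolding all_set_conv_all_nth by (auto simp: nth_list_update)
  have head: "w[i := w ! i - r] ! 0 = (if i = 0 then w ! 0 - r else w ! 0)"
    using assms(1) by (auto simp: nth_list_update)
  show ?thesis
    unfolding admissible_pairs_def is_composition_def all_set_conv_all_nth
    using r_le sum pos head assms by (cases "i = 0") auto
qed

lemma card_update_sub_mem_admissible_pairs: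
  assumes "length w = k - 1" "is_composition n w" "w ! 0 \<ge> 2" "i < length w"
  shows "card {r. r \<le> w ! i \<and> (r, w[i := w ! i - r]) \<in> admissible_pairs k n}
           = w ! i - 1 - of_bool (i = 0)"
proof -
  have "{r. r \<le> w ! i \<and> (r, w[i := w ! i - r]) \<in> admissible_pairs k n}
      = (if i = 0 then {1..w ! 0 - 2} else {1..<w ! i})"
    using assms update_sub_mem_admissible_pairs_iff[of i w _ k n] by (auto; arith)
  then show ?thesis by (simp add: numeral_2_eq_2)
qed

lemma sum_delete_mem_admissible_pairs:
  assumes "2 \<le> k"
  shows "(\<Sum>i\<le>k - 1. of_bool (i < length w \<and> (w ! i, take i w @ drop (Suc i) w) \<in> admissible_pairs k n))
       = of_bool (length w = k \<and> is_composition n w) * (of_bool (w ! 1 \<ge> 2) + (int k - 1) * of_bool (w ! 0 \<ge> 2))"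
proof (cases "length w = k \<and> is_composition n w")
  case True
  let ?f = "\<lambda>i. of_bool (i < length w \<and> (w ! i, take i w @ drop (Suc i) w) \<in> admissible_pairs k n) :: int"
  have "(\<Sum>i\<le>k - 1. ?f i) = ?f 0 + (\<Sum>i<k - 1. ?f (Suc i))"
    by (rule sum.atMost_shift)
  also have "?f 0 = of_bool (w ! 1 \<ge> 2)"
    using True assms delete_mem_admissible_pairs_iff[of k 0 w n] by simp
  also have "(\<Sum>i<k - 1. ?f (Suc i)) = (\<Sum>i<k - 1. of_bool (w ! 0 \<ge> 2))"
    using True assms by (intro sum.cong) (auto simp: delete_mem_admissible_pairs_iff)
  also have "\<dots> = (int k - 1) * of_bool (w ! 0 \<ge> 2)"
    using assms by (simp add: of_nat_diff)
  finally show ?thesis using True by simp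
next
  case False
  then show ?thesis using assms by (auto simp: delete_mem_admissible_pairs_iff intro!: sum.neutral)
qed

lemma sum_card_update_sub_mem_admissible_pairs:
  assumes "2 \<le> k"
  shows "(\<Sum>i<k - 1. int (card {r. i < length w \<and> r \<le> w ! i \<and> (r, w[i := w ! i - r]) \<in> admissible_pairs k n}))
       = of_bool (length w = k - 1 \<and> is_composition n w \<and> w ! 0 \<ge> 2) * (int n - int k)"
proof (cases "length w = k - 1 \<and> is_composition n w \<and> w ! 0 \<ge> 2")
  case True
  then have pos: "w ! i \<ge> 1" if "i < length w" for i
    using that unfolding is_composition_def by (simp add: all_set_conv_all_nth)
  have "(\<Sum>i<k - 1. int (card {r. i < length w \<and> r \<le> w ! i \<and> (r, w[i := w ! i - r]) \<in> admissible_pairs k n}))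
      = (\<Sum>i<k - 1. int (w ! i) - 1 - of_bool (i = 0))"
    using True pos by (intro sum.cong refl) (auto simp: card_update_sub_mem_admissible_pairs of_nat_diff)
  also have "\<dots> = (\<Sum>i<k - 1. int (w ! i)) - int (k - 1) - 1"
    using assms by (simp add: sum_subtractf)
  also have "(\<Sum>i<k - 1. int (w ! i)) = int n"
    using True unfolding is_composition_def by (auto simp: sum_list_sum_nth atLeast0LessThan simp flip: of_nat_sum)
  finally show ?thesis using True assms by (simp add: of_nat_diff)
next
  case False
  then have no_merge: "{r. i < length w \<and> r \<le> w ! i \<and> (r, w[i := w ! i - r]) \<in> admissible_pairs k n} = {}" for i
    using update_sub_mem_admissible_pairs_iff by blast
  show ?thesis
    by (simp only: no_merge False card.empty of_nat_0 sum.neutral_const of_bool_eq mult_zero_left)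
qed

lemma Hsum_stuffle_admissible_pairs_apply:
  assumes "2 \<le> k"
  shows "Hsum (\<lambda>(r, s). stuffle [r] s) (admissible_pairs k n) w
      = of_bool (length w = k \<and> is_composition n w) * (of_bool (w ! 1 \<ge> 2) + (int k - 1) * of_bool (w ! 0 \<ge> 2))
        + of_bool (length w = k - 1 \<and> is_composition n w \<and> w ! 0 \<ge> 2) * (int n - int k)"
proof -
  have "Hsum (\<lambda>(r, s). stuffle [r] s) (admissible_pairs k n) w
      = (\<Sum>i\<le>k - 1. of_bool (i < length w \<and> (w ! i, take i w @ drop (Suc i) w) \<in> admissible_pairs k n))
        + (\<Sum>i<k - 1. int (card {r. i < length w \<and> r \<le> w ! i \<and> (r, w[i := w ! i - r]) \<in> admissible_pairs k n}))"
    by (rule Hsum_stuffle_letter_apply[OF finite_admissible_pairs]) (simp add: admissible_pairs_def)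
  then show ?thesis
    by (simp only: sum_delete_mem_admissible_pairs[OF assms] sum_card_update_sub_mem_admissible_pairs[OF assms])
qed

theorem theorem2p4:
  fixes k n :: nat
  assumes "2 \<le> k" and "k + 1 \<le> n"
  shows "Hsum (\<lambda>(r, s). stuffle [r] s)
           {(r, s). r \<ge> 1 \<and> length s = k - 1 \<and> (\<forall>x\<in>set s. x \<ge> 1) \<and> s ! 0 \<ge> 2
                    \<and> r + sum_list s = n}
       = Hadd (Hadd (Hadd
           (Hsum word {t. length t = k \<and> (\<forall>x\<in>set t. x \<ge> 1) \<and> t ! 0 = 1 \<and> t ! 1 \<ge> 2
                          \<and> sum_list t = n})
           (scale (int k - 1)
             (Hsum word {t. length t = k \<and> (\<forall>x\<in>set t. x \<ge> 1) \<and> t ! 0 \<ge> 2 \<and> t ! 1 = 1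
                            \<and> sum_list t = n})))
           (scale (int k)
             (Hsum word {t. length t = k \<and> (\<forall>x\<in>set t. x \<ge> 1) \<and> t ! 0 \<ge> 2 \<and> t ! 1 \<ge> 2
                            \<and> sum_list t = n})))
           (scale (int n - int k)
             (Hsum word {u. length u = k - 1 \<and> (\<forall>x\<in>set u. x \<ge> 1) \<and> u ! 0 \<ge> 2
                            \<and> sum_list u = n}))"
proof -
  have coeff: "Hsum (\<lambda>(r, s). stuffle [r] s) (admissible_pairs k n) w
      = of_bool (length w = k \<and> (\<forall>x\<in>set w. x \<ge> 1) \<and> w ! 0 = 1 \<and> w ! 1 \<ge> 2 \<and> sum_list w = n)
        + (int k - 1) * of_bool (length w = k \<and> (\<forall>x\<in>set w. x \<ge> 1) \<and> w ! 0 \<ge> 2 \<and> w ! 1 = 1 \<and> sum_list w = n)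
        + int k * of_bool (length w = k \<and> (\<forall>x\<in>set w. x \<ge> 1) \<and> w ! 0 \<ge> 2 \<and> w ! 1 \<ge> 2 \<and> sum_list w = n)
        + (int n - int k) * of_bool (length w = k - 1 \<and> (\<forall>x\<in>set w. x \<ge> 1) \<and> w ! 0 \<ge> 2 \<and> sum_list w = n)"
    for w
  proof (cases "length w = k \<and> is_composition n w")
    case True
    then have "w ! 0 \<ge> 1" "w ! 1 \<ge> 1" "length w \<noteq> k - 1"
      using assms(1) unfolding is_composition_def by (auto simp: all_set_conv_all_nth)
    then have "w ! 0 = 1 \<or> w ! 0 \<ge> 2" "w ! 1 = 1 \<or> w ! 1 \<ge> 2" "length w \<noteq> k - 1"
      by auto
    with True show ?thesis
      unfolding Hsum_stuffle_admissible_pairs_apply[OF assms(1)] is_composition_def by auto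
  next
    case False
    then show ?thesis
      unfolding Hsum_stuffle_admissible_pairs_apply[OF assms(1)] is_composition_def by auto
  qed
  show ?thesis
    unfolding admissible_pairs_def[symmetric]
    by (rule ext) (simp add: coeff Hadd_def scale_def Hsum_word_length_apply[where n = n])
qed

end
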